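(* Let $u$ be a vertex of an oriented graph $D$. (a) If $u$ is not a weak king, then $D$ contains a vertex $v$ such that $v(1\text{-}0)u$, $v$ is not a weak serf, and the arc $vu$ lies in no intransitive triple of $D$. (b) If $u$ is not a weak serf, then $D$ contains a vertex $w$ such that $u(1\text{-}0)w$, $w$ is not a weak king, and the arc $uw$ lies in no intransitive triple of $D$.
   Context: An oriented graph is a digraph with no loops and no pair of symmetric arcs. For vertices $u,v$ write $u(1\text{-}0)v$ if there is an arc from $u$ to $v$, and $u(0\text{-}0)v$ if there is no arc between $u$ and $v$. A vertex $v$ is weakly reachable within two steps from $u$ if $u(1\text{-}0)v$, or $u(0\text{-}0)v$, or for some vertex $w$ one has $u(1\text{-}0)w(1\text{-}0)v$, or $u(1\text{-}0)w(0\text{-}0)v$, or $u(0\text{-}0)w(1\text{-}0)v$. A vertex $u$ is a weak king if every other vertex is weakly reachable within two steps from $u$, and a weak serf if $u$ is weakly reachable within two steps from every other vertex. A triple is the induced oriented subgraph on three distinct vertices; it is intransitive if it is a directed 3-cycle $x(1\text{-}0)y(1\text{-}0)z(1\text{-}0)x$, or a directed path $x(1\text{-}0)y(1\text{-}0)z$ with $x(0\text{-}0)z$; all other triples are transitive. *)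

theory Defs
  imports Main
begin

text \<open>An oriented graph D = (V, A): finite vertex set V, arc relation A with
  A x y meaning x(1-0)y; no loops, no symmetric pairs, arcs inside V.\<close>

definition oriented_graph :: "'a set \<Rightarrow> ('a \<Rightarrow> 'a \<Rightarrow> bool) \<Rightarrow> bool" where
  "oriented_graph V A \<longleftrightarrow> finite V \<and>
     (\<forall>x y. A x y \<longrightarrow> x \<in> V \<and> y \<in> V) \<and>
     (\<forall>x. \<not> A x x) \<and>
     (\<forall>x y. A x y \<longrightarrow> \<not> A y x)"

definition nonadj :: "('a \<Rightarrow> 'a \<Rightarrow> bool) \<Rightarrow> 'a \<Rightarrow> 'a \<Rightarrow> bool" where
  "nonadj A x y \<longleftrightarrow> x \<noteq> y \<and> \<not> A x y \<and> \<not> A y x"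

definition weakly_reach2 :: "'a set \<Rightarrow> ('a \<Rightarrow> 'a \<Rightarrow> bool) \<Rightarrow> 'a \<Rightarrow> 'a \<Rightarrow> bool" where
  "weakly_reach2 V A u v \<longleftrightarrow>
     A u v \<or> nonadj A u v \<or>
     (\<exists>w\<in>V. (A u w \<and> A w v) \<or> (A u w \<and> nonadj A w v) \<or> (nonadj A u w \<and> A w v))"

definition weak_king :: "'a set \<Rightarrow> ('a \<Rightarrow> 'a \<Rightarrow> bool) \<Rightarrow> 'a \<Rightarrow> bool" where
  "weak_king V A u \<longleftrightarrow> (\<forall>v\<in>V. v \<noteq> u \<longrightarrow> weakly_reach2 V A u v)"

definition weak_serf :: "'a set \<Rightarrow> ('a \<Rightarrow> 'a \<Rightarrow> bool) \<Rightarrow> 'a \<Rightarrow> bool" where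
  "weak_serf V A u \<longleftrightarrow> (\<forall>v\<in>V. v \<noteq> u \<longrightarrow> weakly_reach2 V A v u)"

definition intransitive_triple :: "'a set \<Rightarrow> ('a \<Rightarrow> 'a \<Rightarrow> bool) \<Rightarrow> 'a \<Rightarrow> 'a \<Rightarrow> 'a \<Rightarrow> bool" where
  "intransitive_triple V A x y z \<longleftrightarrow>
     x \<in> V \<and> y \<in> V \<and> z \<in> V \<and> x \<noteq> y \<and> y \<noteq> z \<and> x \<noteq> z \<and>
     ((A x y \<and> A y z \<and> A z x) \<or> (A x y \<and> A y z \<and> nonadj A x z))"

definition arc_in_intransitive_triple :: "'a set \<Rightarrow> ('a \<Rightarrow> 'a \<Rightarrow> bool) \<Rightarrow> 'a \<Rightarrow> 'a \<Rightarrow> bool" where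
  "arc_in_intransitive_triple V A a b \<longleftrightarrow>
     (\<exists>x y z. intransitive_triple V A x y z \<and> a \<in> {x, y, z} \<and> b \<in> {x, y, z})"

end

theory Submission
  imports Defs
begin

text \<open>If \<open>u\<close> does not weakly reach \<open>x\<close> within two steps, then \<open>x(1-0)u\<close>, every
  out-neighbour of \<open>u\<close> is an out-neighbour of \<open>x\<close>, and no vertex non-adjacent to \<open>u\<close>
  sends an arc to \<open>x\<close>. These three facts rule out each intransitive triple that could
  contain the arc \<open>xu\<close>, and \<open>u\<close> itself shows that \<open>x\<close> is not a weak serf. Part (b) is
  part (a) for the converse digraph, which swaps weak kings with weak serfs.\<close>

lemma oriented_graph_conversep:
  "oriented_graph V A \<Longrightarrow> oriented_graph V A\<inverse>\<inverse>"
  unfolding oriented_graph_def by auto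

lemma nonadj_commute: "nonadj A x y \<longleftrightarrow> nonadj A y x"
  unfolding nonadj_def by auto

lemma nonadj_conversep [simp]: "nonadj A\<inverse>\<inverse> x y \<longleftrightarrow> nonadj A x y"
  unfolding nonadj_def by auto

lemma weakly_reach2_conversep: "weakly_reach2 V A\<inverse>\<inverse> u v \<longleftrightarrow> weakly_reach2 V A v u"
  unfolding weakly_reach2_def by (auto simp: nonadj_commute)

lemma weak_king_conversep [simp]: "weak_king V A\<inverse>\<inverse> u \<longleftrightarrow> weak_serf V A u"
  unfolding weak_king_def weak_serf_def by (simp add: weakly_reach2_conversep)

lemma weak_serf_conversep [simp]: "weak_serf V A\<inverse>\<inverse> u \<longleftrightarrow> weak_king V A u"
  unfolding weak_king_def weak_serf_def by (simp add: weakly_reach2_conversep)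

lemma intransitive_triple_conversep:
  "intransitive_triple V A\<inverse>\<inverse> x y z \<longleftrightarrow> intransitive_triple V A z y x"
  unfolding intransitive_triple_def by (auto simp: nonadj_commute)

lemma arc_in_intransitive_triple_conversep [simp]:
  "arc_in_intransitive_triple V A\<inverse>\<inverse> a b \<longleftrightarrow> arc_in_intransitive_triple V A b a"
  unfolding arc_in_intransitive_triple_def intransitive_triple_conversep by blast

lemma not_weakly_reach2D:
  assumes "oriented_graph V A" and "x \<in> V" and "x \<noteq> u" and "\<not> weakly_reach2 V A u x"
  shows "A x u" and "\<And>w. A u w \<Longrightarrow> A x w" and "\<And>w. nonadj A u w \<Longrightarrow> \<not> A w x"
proof -
  have asym: "\<And>y z. A y z \<Longrightarrow> \<not> A z y" and inV: "\<And>y z. A y z \<Longrightarrow> y \<in> V \<and> z \<in> V"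
    using assms(1) unfolding oriented_graph_def by auto
  show xu: "A x u"
    using assms(3,4) unfolding weakly_reach2_def nonadj_def by auto
  show "A x w" if "A u w" for w
    using assms(4) that inV[OF that] asym[OF xu] unfolding weakly_reach2_def nonadj_def by metis
  show "\<not> A w x" if "nonadj A u w" for w
    using assms(4) that inV unfolding weakly_reach2_def by metis
qed

lemma arc_not_in_intransitive_triple:
  assumes "oriented_graph V A" and "A x u"
    and out: "\<And>w. A u w \<Longrightarrow> A x w" and nonadj_in: "\<And>w. nonadj A u w \<Longrightarrow> \<not> A w x"
  shows "\<not> arc_in_intransitive_triple V A x u"
proof -
  have irr: "\<And>y. \<not> A y y" and asym: "\<And>y z. A y z \<Longrightarrow> \<not> A z y"
    using assms(1) unfolding oriented_graph_def by auto
  show ?thesis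
    unfolding arc_in_intransitive_triple_def intransitive_triple_def
    using assms(2) out nonadj_in irr asym unfolding nonadj_def by (clarsimp; metis)
qed

lemma not_weak_king_imp_transitive_in_arc:
  assumes "oriented_graph V A" and "u \<in> V" and "\<not> weak_king V A u"
  shows "\<exists>v\<in>V. A v u \<and> \<not> weak_serf V A v \<and> \<not> arc_in_intransitive_triple V A v u"
proof -
  obtain x where x: "x \<in> V" "x \<noteq> u" "\<not> weakly_reach2 V A u x"
    using assms(3) unfolding weak_king_def by auto
  note reach = not_weakly_reach2D[OF assms(1) x]
  have "\<not> weak_serf V A x"
    using x assms(2) unfolding weak_serf_def by auto
  moreover have "\<not> arc_in_intransitive_triple V A x u"
    using arc_not_in_intransitive_triple[OF assms(1) reach] .
  ultimately show ?thesis
    using x(1) reach(1) by blast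
qed

lemma not_weak_serf_imp_transitive_out_arc:
  assumes "oriented_graph V A" and "u \<in> V" and "\<not> weak_serf V A u"
  shows "\<exists>w\<in>V. A u w \<and> \<not> weak_king V A w \<and> \<not> arc_in_intransitive_triple V A u w"
  using not_weak_king_imp_transitive_in_arc[OF oriented_graph_conversep[OF assms(1)] assms(2)]
    assms(3) by simp

theorem lemma1:
  fixes V :: "'a set" and A :: "'a \<Rightarrow> 'a \<Rightarrow> bool" and u :: 'a
  assumes "oriented_graph V A" and "u \<in> V"
  shows "(\<not> weak_king V A u \<longrightarrow>
            (\<exists>v\<in>V. A v u \<and> \<not> weak_serf V A v \<and> \<not> arc_in_intransitive_triple V A v u))
       \<and> (\<not> weak_serf V A u \<longrightarrow>
            (\<exists>w\<in>V. A u w \<and> \<not> weak_king V A w \<and> \<not> arc_in_intransitive_triple V A u w))"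
  using not_weak_king_imp_transitive_in_arc[OF assms] not_weak_serf_imp_transitive_out_arc[OF assms]
  by blast

end
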